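(* In the Standing Setting, assume (iv), (vi) and (vii). Then $\operatorname{Ann}_{L_1}L_{-2}=0$.
   Context: $\mathbf F$ is an algebraically closed field of characteristic $3$. Standing Setting: $L=\bigoplus_{i=-q}^{r}L_i$ is a finite-dimensional $\mathbb Z$-graded Lie algebra over $\mathbf F$ with $L_{-q}\ne0\ne L_r$, $q\ge 2$, satisfying (A) $L_0$ is classical reductive; (B) $L_{-1}$ is an irreducible $L_0$-module; (C) for $j\ge0$, if $x\in L_j$ and $[x,L_{-1}]=0$ then $x=0$; (D) $L_{-i}=[L_{-i+1},L_{-1}]$ for $i>1$. Moreover the largest ideal of $L$ contained in $\bigoplus_{i<0}L_i$ is zero, and $L$ has a unique minimal ideal $S=\bigoplus_{i=-q}^{s}S_i$ which is a simple graded Lie algebra with $S_s\ne0$ and $S_i=L_i$ for all $i<0$. Additional conditions: (iv) $L_1=S_1$ and $L_1$ is an irreducible $L_0$-module; (vi) for every $i\ge 0$, if $0\ne x\in L_{-i}$ then $[L_1,x]\ne0$; (vii) the representation of $L_0'=[L_0,L_0]$ on $L_{-1}$ is not restricted, i.e. there is $y\in L_0'$ with $(\operatorname{ad}y)^3\ne\operatorname{ad}(y^{[3]})$ on $L_{-1}$, where $L_0'$ has the natural $3$-structure ($e_\alpha^{[3]}=0$, $h_i^{[3]}=h_i$ on a Chevalley basis of each classical summand). $\operatorname{Ann}_N M=\{n\in N:[n,M]=0\}$. *)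

theory Defs
  imports Complex_Main "HOL-Computational_Algebra.Polynomial" "HOL-Library.Function_Algebras"
begin

definition alg_closed_field :: "'a::field itself \<Rightarrow> bool" where
  "alg_closed_field _ \<longleftrightarrow> (\<forall>p :: 'a poly. degree p \<ge> 1 \<longrightarrow> (\<exists>x. poly p x = 0))"

section \<open>Lie algebras: ambient vector space 'v over 'a with scalar multiplication sc and bracket br\<close>

definition lie_algebra :: "('a::field \<Rightarrow> 'v::ab_group_add \<Rightarrow> 'v) \<Rightarrow> ('v \<Rightarrow> 'v \<Rightarrow> 'v) \<Rightarrow> bool" where
  "lie_algebra sc br \<longleftrightarrow> module sc
     \<and> (\<forall>x y z. br (x + y) z = br x z + br y z)
     \<and> (\<forall>x y z. br x (y + z) = br x y + br x z)
     \<and> (\<forall>c x y. br (sc c x) y = sc c (br x y))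
     \<and> (\<forall>c x y. br x (sc c y) = sc c (br x y))
     \<and> (\<forall>x. br x x = 0)
     \<and> (\<forall>x y z. br x (br y z) + br y (br z x) + br z (br x y) = 0)"

definition fin_dim :: "('a::field \<Rightarrow> 'v::ab_group_add \<Rightarrow> 'v) \<Rightarrow> bool" where
  "fin_dim sc \<longleftrightarrow> (\<exists>B. finite B \<and> module.span sc B = UNIV)"

definition brk :: "('a::field \<Rightarrow> 'v::ab_group_add \<Rightarrow> 'v) \<Rightarrow> ('v \<Rightarrow> 'v \<Rightarrow> 'v) \<Rightarrow> 'v set \<Rightarrow> 'v set \<Rightarrow> 'v set" where
  "brk sc br A B = module.span sc {br a b | a b. a \<in> A \<and> b \<in> B}"

definition Ann :: "('v \<Rightarrow> 'v \<Rightarrow> 'v::ab_group_add) \<Rightarrow> 'v set \<Rightarrow> 'v set \<Rightarrow> 'v set" where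
  "Ann br N M = {n \<in> N. \<forall>m \<in> M. br n m = 0}"

definition subalg :: "('a::field \<Rightarrow> 'v::ab_group_add \<Rightarrow> 'v) \<Rightarrow> ('v \<Rightarrow> 'v \<Rightarrow> 'v) \<Rightarrow> 'v set \<Rightarrow> bool" where
  "subalg sc br A \<longleftrightarrow> module.subspace sc A \<and> (\<forall>x\<in>A. \<forall>y\<in>A. br x y \<in> A)"

definition ideal_of :: "('a::field \<Rightarrow> 'v::ab_group_add \<Rightarrow> 'v) \<Rightarrow> ('v \<Rightarrow> 'v \<Rightarrow> 'v) \<Rightarrow> 'v set \<Rightarrow> 'v set \<Rightarrow> bool" where
  "ideal_of sc br A I \<longleftrightarrow> module.subspace sc I \<and> I \<subseteq> A \<and> (\<forall>x\<in>A. \<forall>y\<in>I. br x y \<in> I)"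

definition abelian :: "('v \<Rightarrow> 'v \<Rightarrow> 'v::ab_group_add) \<Rightarrow> 'v set \<Rightarrow> bool" where
  "abelian br A \<longleftrightarrow> (\<forall>x\<in>A. \<forall>y\<in>A. br x y = 0)"

definition simple_alg :: "('a::field \<Rightarrow> 'v::ab_group_add \<Rightarrow> 'v) \<Rightarrow> ('v \<Rightarrow> 'v \<Rightarrow> 'v) \<Rightarrow> 'v set \<Rightarrow> bool" where
  "simple_alg sc br A \<longleftrightarrow> subalg sc br A \<and> \<not> abelian br A
     \<and> (\<forall>J. ideal_of sc br A J \<longrightarrow> J = {0} \<or> J = A)"

definition irred_module :: "('a::field \<Rightarrow> 'v::ab_group_add \<Rightarrow> 'v) \<Rightarrow> ('v \<Rightarrow> 'v \<Rightarrow> 'v) \<Rightarrow> 'v set \<Rightarrow> 'v set \<Rightarrow> bool" where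
  "irred_module sc br A M \<longleftrightarrow> M \<noteq> {0} \<and>
     (\<forall>W. module.subspace sc W \<and> W \<subseteq> M \<and> (\<forall>a\<in>A. \<forall>w\<in>W. br a w \<in> W) \<longrightarrow> W = {0} \<or> W = M)"

definition int_dsum :: "('a::field \<Rightarrow> 'v::ab_group_add \<Rightarrow> 'v) \<Rightarrow> 'v set \<Rightarrow> nat \<Rightarrow> (nat \<Rightarrow> 'v set) \<Rightarrow> bool" where
  "int_dsum sc A k I \<longleftrightarrow> (\<forall>j<k. I j \<subseteq> A) \<and>
     (\<forall>x\<in>A. \<exists>!g. (\<forall>j<k. g j \<in> I j) \<and> (\<forall>j\<ge>k. g j = 0) \<and> x = (\<Sum>j<k. g j))"

section \<open>Cartan matrices of finite type and root systems\<close>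

text \<open>C i j = <alpha_i, alpha_j^vee>, indices 0..l-1. d is a positive symmetriser:
  (alpha_i, alpha_j) = C i j * d j, symmetric and positive definite.\<close>
definition cartan_finite :: "nat \<Rightarrow> (nat \<Rightarrow> nat \<Rightarrow> int) \<Rightarrow> (nat \<Rightarrow> real) \<Rightarrow> bool" where
  "cartan_finite l C d \<longleftrightarrow> l \<ge> 1
     \<and> (\<forall>i<l. C i i = 2)
     \<and> (\<forall>i<l. \<forall>j<l. i \<noteq> j \<longrightarrow> C i j \<le> 0)
     \<and> (\<forall>i<l. d i > 0)
     \<and> (\<forall>i<l. \<forall>j<l. real_of_int (C i j) * d j = real_of_int (C j i) * d i)
     \<and> (\<forall>x :: nat \<Rightarrow> real. (\<exists>i<l. x i \<noteq> 0) \<longrightarrow>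
          (\<Sum>i<l. \<Sum>j<l. x i * real_of_int (C i j) * d j * x j) > 0)
     \<and> \<not> (\<exists>P. P \<subseteq> {..<l} \<and> P \<noteq> {} \<and> P \<noteq> {..<l} \<and>
            (\<forall>i\<in>P. \<forall>j\<in>{..<l} - P. C i j = 0))"

type_synonym root = "nat \<Rightarrow> int"

definition sroot :: "nat \<Rightarrow> root" where
  "sroot i = (\<lambda>k. if k = i then 1 else 0)"

definition pairing :: "nat \<Rightarrow> (nat \<Rightarrow> nat \<Rightarrow> int) \<Rightarrow> root \<Rightarrow> nat \<Rightarrow> int" where
  "pairing l C \<beta> i = (\<Sum>k<l. \<beta> k * C k i)"

definition sreflect :: "nat \<Rightarrow> (nat \<Rightarrow> nat \<Rightarrow> int) \<Rightarrow> nat \<Rightarrow> root \<Rightarrow> root" where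
  "sreflect l C i \<beta> = (\<lambda>k. \<beta> k - (if k = i then pairing l C \<beta> i else 0))"

inductive_set roots :: "nat \<Rightarrow> (nat \<Rightarrow> nat \<Rightarrow> int) \<Rightarrow> root set" for l C where
  simple: "i < l \<Longrightarrow> sroot i \<in> roots l C"
| refl: "\<beta> \<in> roots l C \<Longrightarrow> i < l \<Longrightarrow> sreflect l C i \<beta> \<in> roots l C"

definition rform :: "nat \<Rightarrow> (nat \<Rightarrow> nat \<Rightarrow> int) \<Rightarrow> (nat \<Rightarrow> real) \<Rightarrow> root \<Rightarrow> root \<Rightarrow> real" where
  "rform l C d \<beta> \<gamma> = (\<Sum>i<l. \<Sum>j<l. real_of_int (\<beta> i) * real_of_int (C i j) * d j * real_of_int (\<gamma> j))"

text \<open>Coefficients of the coroot alpha^vee in the basis of simple coroots alpha_i^vee.\<close>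
definition coroot_coeff :: "nat \<Rightarrow> (nat \<Rightarrow> nat \<Rightarrow> int) \<Rightarrow> (nat \<Rightarrow> real) \<Rightarrow> root \<Rightarrow> nat \<Rightarrow> int" where
  "coroot_coeff l C d \<alpha> i = round (2 * real_of_int (\<alpha> i) * d i / rform l C d \<alpha> \<alpha>)"

definition string_r :: "nat \<Rightarrow> (nat \<Rightarrow> nat \<Rightarrow> int) \<Rightarrow> root \<Rightarrow> root \<Rightarrow> nat" where
  "string_r l C \<alpha> \<beta> = (GREATEST k::nat. (\<lambda>m. \<beta> m - int k * \<alpha> m) \<in> roots l C)"

text \<open>Index set of a Chevalley basis: Inl i ~ h_i (i<l), Inr alpha ~ e_alpha.\<close>
type_synonym cidx = "nat + root"

definition cindex :: "nat \<Rightarrow> (nat \<Rightarrow> nat \<Rightarrow> int) \<Rightarrow> cidx set" where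
  "cindex l C = Inl ` {..<l} \<union> Inr ` roots l C"

definition cunit :: "cidx \<Rightarrow> cidx \<Rightarrow> int" where
  "cunit x = (\<lambda>w. if w = x then 1 else 0)"

text \<open>Structure constants (over Z) of the Chevalley basis with sign function N:
  [h_i,h_j]=0, [h_i,e_b]=<b,a_i^vee> e_b, [e_a,e_-a]=h_a, [e_a,e_b]=N a b e_(a+b).\<close>
definition cbr :: "nat \<Rightarrow> (nat \<Rightarrow> nat \<Rightarrow> int) \<Rightarrow> (nat \<Rightarrow> real) \<Rightarrow> (root \<Rightarrow> root \<Rightarrow> int)
    \<Rightarrow> cidx \<Rightarrow> cidx \<Rightarrow> (cidx \<Rightarrow> int)" where
  "cbr l C d N x y = (case (x, y) of
      (Inl i, Inl j) \<Rightarrow> (\<lambda>w. 0)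
    | (Inl i, Inr \<beta>) \<Rightarrow> (\<lambda>w. pairing l C \<beta> i * cunit (Inr \<beta>) w)
    | (Inr \<beta>, Inl i) \<Rightarrow> (\<lambda>w. - pairing l C \<beta> i * cunit (Inr \<beta>) w)
    | (Inr \<alpha>, Inr \<beta>) \<Rightarrow>
        (if \<alpha> + \<beta> = 0 then (\<lambda>w. \<Sum>i<l. coroot_coeff l C d \<alpha> i * cunit (Inl i) w)
         else if \<alpha> + \<beta> \<in> roots l C then (\<lambda>w. N \<alpha> \<beta> * cunit (Inr (\<alpha> + \<beta>)) w)
         else (\<lambda>w. 0)))"

text \<open>The sign data N is a valid Chevalley system: |N a b| = r+1 and the resulting
  integral structure constants define a Lie ring (antisymmetry and Jacobi).\<close>
definition chevalley_data :: "nat \<Rightarrow> (nat \<Rightarrow> nat \<Rightarrow> int) \<Rightarrow> (nat \<Rightarrow> real) \<Rightarrow> (root \<Rightarrow> root \<Rightarrow> int) \<Rightarrow> bool" where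
  "chevalley_data l C d N \<longleftrightarrow> cartan_finite l C d
     \<and> (\<forall>\<alpha>\<in>roots l C. \<forall>\<beta>\<in>roots l C. \<alpha> + \<beta> \<in> roots l C \<longrightarrow> \<bar>N \<alpha> \<beta>\<bar> = int (string_r l C \<alpha> \<beta>) + 1)
     \<and> (\<forall>x\<in>cindex l C. \<forall>y\<in>cindex l C. cbr l C d N x y = (\<lambda>w. - cbr l C d N y x w))
     \<and> (\<forall>x\<in>cindex l C. \<forall>y\<in>cindex l C. \<forall>z\<in>cindex l C. \<forall>t.
          (\<Sum>w\<in>cindex l C. cbr l C d N y z w * cbr l C d N x w t)
        + (\<Sum>w\<in>cindex l C. cbr l C d N z x w * cbr l C d N y w t)
        + (\<Sum>w\<in>cindex l C. cbr l C d N x y w * cbr l C d N z w t) = 0)"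

text \<open>psi maps the Chevalley basis of the Chevalley algebra g_F of type C onto a spanning
  family of A, respecting the bracket, i.e. A is a homomorphic image of g_F with
  distinguished (images of) Chevalley basis elements psi(Inl i) = h_i, psi(Inr a) = e_a.\<close>
definition chevalley_image :: "('a::field \<Rightarrow> 'v::ab_group_add \<Rightarrow> 'v) \<Rightarrow> ('v \<Rightarrow> 'v \<Rightarrow> 'v) \<Rightarrow> 'v set
    \<Rightarrow> nat \<Rightarrow> (nat \<Rightarrow> nat \<Rightarrow> int) \<Rightarrow> (nat \<Rightarrow> real) \<Rightarrow> (root \<Rightarrow> root \<Rightarrow> int) \<Rightarrow> (cidx \<Rightarrow> 'v) \<Rightarrow> bool" where
  "chevalley_image sc br A l C d N \<psi> \<longleftrightarrow> chevalley_data l C d N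
     \<and> module.span sc (\<psi> ` cindex l C) = A
     \<and> (\<forall>x\<in>cindex l C. \<forall>y\<in>cindex l C.
          br (\<psi> x) (\<psi> y) = (\<Sum>z\<in>cindex l C. sc (of_int (cbr l C d N x y z)) (\<psi> z)))"

definition classical_simple :: "('a::field \<Rightarrow> 'v::ab_group_add \<Rightarrow> 'v) \<Rightarrow> ('v \<Rightarrow> 'v \<Rightarrow> 'v) \<Rightarrow> 'v set \<Rightarrow> bool" where
  "classical_simple sc br A \<longleftrightarrow> simple_alg sc br A \<and> (\<exists>l C d N \<psi>. chevalley_image sc br A l C d N \<psi>)"

section \<open>gl(n), sl(n), pgl(n)\<close>

type_synonym 'a mat = "nat \<Rightarrow> nat \<Rightarrow> 'a"

definition mats :: "nat \<Rightarrow> 'a::field mat set" where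
  "mats n = {M. \<forall>i j. (n \<le> i \<or> n \<le> j) \<longrightarrow> M i j = 0}"

definition mcomm :: "nat \<Rightarrow> 'a::field mat \<Rightarrow> 'a mat \<Rightarrow> 'a mat" where
  "mcomm n M N = (\<lambda>i j. (\<Sum>t<n. M i t * N t j) - (\<Sum>t<n. N i t * M t j))"

definition slmats :: "nat \<Rightarrow> 'a::field mat set" where
  "slmats n = {M \<in> mats n. (\<Sum>i<n. M i i) = 0}"

definition scalar_mats :: "nat \<Rightarrow> 'a::field mat set" where
  "scalar_mats n = {(\<lambda>i j. if i = j \<and> i < n then c else 0) | c. True}"

definition mat_hom_on :: "('a::field \<Rightarrow> 'v::ab_group_add \<Rightarrow> 'v) \<Rightarrow> ('v \<Rightarrow> 'v \<Rightarrow> 'v) \<Rightarrow> nat \<Rightarrow> 'a mat set \<Rightarrow> ('a mat \<Rightarrow> 'v) \<Rightarrow> bool" where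
  "mat_hom_on sc br n X f \<longleftrightarrow> (\<forall>M\<in>X. \<forall>N\<in>X. f (M + N) = f M + f N \<and> f (mcomm n M N) = br (f M) (f N))
     \<and> (\<forall>c. \<forall>M\<in>X. f (\<lambda>i j. c * M i j) = sc c (f M))"

definition iso_gl :: "('a::field \<Rightarrow> 'v::ab_group_add \<Rightarrow> 'v) \<Rightarrow> ('v \<Rightarrow> 'v \<Rightarrow> 'v) \<Rightarrow> 'v set \<Rightarrow> nat \<Rightarrow> bool" where
  "iso_gl sc br A n \<longleftrightarrow> (\<exists>f. mat_hom_on sc br n (mats n) f \<and> bij_betw f (mats n) A)"

definition iso_sl :: "('a::field \<Rightarrow> 'v::ab_group_add \<Rightarrow> 'v) \<Rightarrow> ('v \<Rightarrow> 'v \<Rightarrow> 'v) \<Rightarrow> 'v set \<Rightarrow> nat \<Rightarrow> bool" where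
  "iso_sl sc br A n \<longleftrightarrow> (\<exists>f. mat_hom_on sc br n (slmats n) f \<and> bij_betw f (slmats n) A)"

definition iso_pgl :: "('a::field \<Rightarrow> 'v::ab_group_add \<Rightarrow> 'v) \<Rightarrow> ('v \<Rightarrow> 'v \<Rightarrow> 'v) \<Rightarrow> 'v set \<Rightarrow> nat \<Rightarrow> bool" where
  "iso_pgl sc br A n \<longleftrightarrow> (\<exists>f. mat_hom_on sc br n (mats n) f \<and> f ` mats n = A
      \<and> (\<forall>M\<in>mats n. f M = 0 \<longleftrightarrow> M \<in> scalar_mats n))"

definition cr_summand :: "('a::field \<Rightarrow> 'v::ab_group_add \<Rightarrow> 'v) \<Rightarrow> ('v \<Rightarrow> 'v \<Rightarrow> 'v) \<Rightarrow> 'v set \<Rightarrow> bool" where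
  "cr_summand sc br I \<longleftrightarrow> abelian br I \<or> classical_simple sc br I
     \<or> (\<exists>n. n > 0 \<and> 3 dvd n \<and> (iso_gl sc br I n \<or> iso_sl sc br I n \<or> iso_pgl sc br I n))"

definition cr_decomp :: "('a::field \<Rightarrow> 'v::ab_group_add \<Rightarrow> 'v) \<Rightarrow> ('v \<Rightarrow> 'v \<Rightarrow> 'v) \<Rightarrow> 'v set \<Rightarrow> nat \<Rightarrow> (nat \<Rightarrow> 'v set) \<Rightarrow> bool" where
  "cr_decomp sc br A k I \<longleftrightarrow> int_dsum sc A k I
     \<and> (\<forall>j<k. ideal_of sc br A (I j) \<and> cr_summand sc br (I j))"

definition classical_reductive :: "('a::field \<Rightarrow> 'v::ab_group_add \<Rightarrow> 'v) \<Rightarrow> ('v \<Rightarrow> 'v \<Rightarrow> 'v) \<Rightarrow> 'v set \<Rightarrow> bool" where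
  "classical_reductive sc br A \<longleftrightarrow> subalg sc br A \<and> (\<exists>k I. cr_decomp sc br A k I)"

section \<open>Natural 3-structure on A' = [A,A] and non-restricted action\<close>

text \<open>phi is the 3-map on A' determined by: 3-semilinearity, Jacobson's formula for p = 3
  ((x+y)^[3] = x^[3] + y^[3] + [y,[y,x]] + 2[x,[y,x]]), and e_a^[3] = 0, h_i^[3] = h_i on
  Chevalley bases of the classical summands (I j)' of A'.\<close>
definition natural_3map :: "('a::field \<Rightarrow> 'v::ab_group_add \<Rightarrow> 'v) \<Rightarrow> ('v \<Rightarrow> 'v \<Rightarrow> 'v) \<Rightarrow> 'v set
    \<Rightarrow> nat \<Rightarrow> (nat \<Rightarrow> 'v set) \<Rightarrow> (nat \<Rightarrow> nat) \<Rightarrow> (nat \<Rightarrow> nat \<Rightarrow> nat \<Rightarrow> int) \<Rightarrow> (nat \<Rightarrow> nat \<Rightarrow> real)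
    \<Rightarrow> (nat \<Rightarrow> root \<Rightarrow> root \<Rightarrow> int) \<Rightarrow> (nat \<Rightarrow> cidx \<Rightarrow> 'v) \<Rightarrow> ('v \<Rightarrow> 'v) \<Rightarrow> bool" where
  "natural_3map sc br A k I l C d N \<psi> \<phi> \<longleftrightarrow>
     (\<forall>j<k. \<not> abelian br (I j) \<longrightarrow> chevalley_image sc br (brk sc br (I j) (I j)) (l j) (C j) (d j) (N j) (\<psi> j))
   \<and> (\<forall>x\<in>brk sc br A A. \<forall>y\<in>brk sc br A A.
        \<phi> (x + y) = \<phi> x + \<phi> y + br y (br y x) + sc 2 (br x (br y x)))
   \<and> (\<forall>c. \<forall>x\<in>brk sc br A A. \<phi> (sc c x) = sc (c ^ 3) (\<phi> x))
   \<and> (\<forall>j<k. \<not> abelian br (I j) \<longrightarrow>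
        (\<forall>i<l j. \<phi> (\<psi> j (Inl i)) = \<psi> j (Inl i))
      \<and> (\<forall>\<alpha>\<in>roots (l j) (C j). \<phi> (\<psi> j (Inr \<alpha>)) = 0))"

text \<open>Condition (vii): the representation of A' on M is not restricted w.r.t. the natural 3-structure.\<close>
definition not_restricted_on :: "('a::field \<Rightarrow> 'v::ab_group_add \<Rightarrow> 'v) \<Rightarrow> ('v \<Rightarrow> 'v \<Rightarrow> 'v) \<Rightarrow> 'v set \<Rightarrow> 'v set \<Rightarrow> bool" where
  "not_restricted_on sc br A M \<longleftrightarrow>
     (\<exists>k I l C d N \<psi> \<phi>. cr_decomp sc br A k I \<and> natural_3map sc br A k I l C d N \<psi> \<phi>
        \<and> (\<exists>y\<in>brk sc br A A. \<exists>v\<in>M. br y (br y (br y v)) \<noteq> br (\<phi> y) v))"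

definition graded_lie :: "('a::field \<Rightarrow> 'v::ab_group_add \<Rightarrow> 'v) \<Rightarrow> ('v \<Rightarrow> 'v \<Rightarrow> 'v) \<Rightarrow> (int \<Rightarrow> 'v set) \<Rightarrow> int \<Rightarrow> int \<Rightarrow> bool" where
  "graded_lie sc br G q r \<longleftrightarrow> lie_algebra sc br \<and> fin_dim sc
     \<and> (\<forall>i. module.subspace sc (G i))
     \<and> (\<forall>i. (i < -q \<or> r < i) \<longrightarrow> G i = {0})
     \<and> G (-q) \<noteq> {0} \<and> G r \<noteq> {0}
     \<and> (\<forall>i j x y. x \<in> G i \<longrightarrow> y \<in> G j \<longrightarrow> br x y \<in> G (i + j))
     \<and> (\<forall>v. \<exists>!g. (\<forall>i. g i \<in> G i) \<and> (\<forall>i. i \<notin> {-q..r} \<longrightarrow> g i = 0) \<and> v = (\<Sum>i\<in>{-q..r}. g i))"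

definition minimal_ideal :: "('a::field \<Rightarrow> 'v::ab_group_add \<Rightarrow> 'v) \<Rightarrow> ('v \<Rightarrow> 'v \<Rightarrow> 'v) \<Rightarrow> 'v set \<Rightarrow> bool" where
  "minimal_ideal sc br S \<longleftrightarrow> ideal_of sc br UNIV S \<and> S \<noteq> {0}
     \<and> (\<forall>J. ideal_of sc br UNIV J \<and> J \<subseteq> S \<longrightarrow> J = {0} \<or> J = S)"

end

theory Submission
  imports Defs
begin

text \<open>The annihilator of L_{-2} in L_1 is an L_0-submodule of L_1, by the Jacobi identity,
  because L_0 preserves both L_1 and L_{-2}. Since L_1 is irreducible, the annihilator is either
  0 or all of L_1. It cannot be all of L_1: condition (D) together with L_{-q} \<noteq> 0 and q \<ge> 2
  gives L_{-2} \<noteq> 0, and by (vi) no nonzero element of L_{-2} is killed by L_1.\<close>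

context
  fixes sc :: "'a::field \<Rightarrow> 'v::ab_group_add \<Rightarrow> 'v" and br :: "'v \<Rightarrow> 'v \<Rightarrow> 'v"
  assumes lie: "lie_algebra sc br"
begin

lemma lie_module: "module sc"
  using lie unfolding lie_algebra_def by blast

lemma br_zero_left: "br 0 y = 0"
proof -
  have "br (0 + 0) y = br 0 y + br 0 y" using lie unfolding lie_algebra_def by blast
  thus ?thesis by simp
qed

lemma br_zero_right: "br x 0 = 0"
proof -
  have "br x (0 + 0) = br x 0 + br x 0" using lie unfolding lie_algebra_def by blast
  thus ?thesis by simp
qed

lemma br_minus_right: "br x (- y) = - br x y"
proof -
  have "br x (y + - y) = br x y + br x (- y)" using lie unfolding lie_algebra_def by blast
  hence "br x y + br x (- y) = 0" using br_zero_right by simp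
  thus ?thesis by (simp add: eq_neg_iff_add_eq_0 add.commute)
qed

lemma br_anticomm: "br y x = - br x y"
proof -
  have "br (x + y) (x + y) = br x (x + y) + br y (x + y)"
    and "br x (x + y) = br x x + br x y" and "br y (x + y) = br y x + br y y"
    and "br (x + y) (x + y) = 0" and "br x x = 0" and "br y y = 0"
    using lie unfolding lie_algebra_def by blast+
  hence "br x y + br y x = 0" by simp
  thus ?thesis by (simp add: eq_neg_iff_add_eq_0 add.commute)
qed

lemma br_annihilates_bracket:
  assumes "br w m = 0" and "br w (br a m) = 0"
  shows "br (br a w) m = 0"
proof -
  have "br a (br w m) + br w (br m a) + br m (br a w) = 0"
    using lie unfolding lie_algebra_def by blast
  moreover have "br w (br m a) = 0"
    using br_anticomm[of m a] br_minus_right assms(2) by simp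
  ultimately have "br m (br a w) = 0" using assms(1) br_zero_right by simp
  thus ?thesis using br_anticomm[of "br a w" m] by simp
qed

lemma brk_zero_left: "brk sc br {0} B = {0}"
proof -
  have "{br a b | a b. a \<in> {0} \<and> b \<in> B} \<subseteq> {0}" using br_zero_left by auto
  hence "brk sc br {0} B \<subseteq> {0}"
    unfolding brk_def
    using module.span_minimal[OF lie_module] module.subspace_single_0[OF lie_module] by blast
  moreover have "0 \<in> brk sc br {0} B"
    unfolding brk_def using module.span_zero[OF lie_module] .
  ultimately show ?thesis by blast
qed

lemma subspace_Ann:
  assumes "module.subspace sc N"
  shows "module.subspace sc (Ann br N M)"
  unfolding module.subspace_def[OF lie_module] Ann_def
proof (intro conjI ballI allI)
  show "0 \<in> {n \<in> N. \<forall>m\<in>M. br n m = 0}"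
    using assms br_zero_left unfolding module.subspace_def[OF lie_module] by auto
next
  fix x y assume "x \<in> {n \<in> N. \<forall>m\<in>M. br n m = 0}" "y \<in> {n \<in> N. \<forall>m\<in>M. br n m = 0}"
  thus "x + y \<in> {n \<in> N. \<forall>m\<in>M. br n m = 0}"
    using assms lie unfolding module.subspace_def[OF lie_module] lie_algebra_def by auto
next
  fix c x assume "x \<in> {n \<in> N. \<forall>m\<in>M. br n m = 0}"
  thus "sc c x \<in> {n \<in> N. \<forall>m\<in>M. br n m = 0}"
    using assms lie unfolding module.subspace_def[OF lie_module] lie_algebra_def
    by (auto simp: module.scale_zero_right[OF lie_module])
qed

lemma Ann_invariant:
  assumes "\<forall>a\<in>A. \<forall>n\<in>N. br a n \<in> N" and "\<forall>a\<in>A. \<forall>m\<in>M. br a m \<in> M"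
  shows "\<forall>a\<in>A. \<forall>w\<in>Ann br N M. br a w \<in> Ann br N M"
proof (intro ballI)
  fix a w assume a: "a \<in> A" and w: "w \<in> Ann br N M"
  have "br (br a w) m = 0" if "m \<in> M" for m
    using br_annihilates_bracket w that a assms(2) unfolding Ann_def by blast
  with a w assms(1) show "br a w \<in> Ann br N M" unfolding Ann_def by blast
qed

lemma Ann_irred_module:
  assumes "irred_module sc br A N" and "module.subspace sc N"
    and "\<forall>a\<in>A. \<forall>n\<in>N. br a n \<in> N" and "\<forall>a\<in>A. \<forall>m\<in>M. br a m \<in> M"
  shows "Ann br N M = {0} \<or> Ann br N M = N"
proof -
  have "Ann br N M \<subseteq> N" unfolding Ann_def by blast
  with assms subspace_Ann Ann_invariant show ?thesis unfolding irred_module_def by simp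
qed

end

lemma negative_part_vanishes_below:
  assumes lie: "lie_algebra sc br"
    and D: "\<forall>i>1. G (-i) = brk sc br (G (-i + 1)) (G (-1))"
    and "n \<ge> 1" and "G (-n) = {0}"
  shows "G (- (n + int k)) = {0}"
proof (induction k)
  case 0
  then show ?case using assms(4) by simp
next
  case (Suc k)
  have "n + int (Suc k) > 1" and "- (n + int (Suc k)) + 1 = - (n + int k)"
    using \<open>n \<ge> 1\<close> by simp_all
  then have "G (- (n + int (Suc k))) = brk sc br (G (- (n + int k))) (G (-1))"
    using D by metis
  then show ?case using Suc brk_zero_left[OF lie] by simp
qed

theorem lemma2p26:
  fixes sc :: "'a::field \<Rightarrow> 'v::ab_group_add \<Rightarrow> 'v"
    and br :: "'v \<Rightarrow> 'v \<Rightarrow> 'v"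
    and G :: "int \<Rightarrow> 'v set"
    and q r s :: int
    and S :: "'v set"
  assumes field: "alg_closed_field TYPE('a)" "CHAR('a) = 3"
    and grad: "graded_lie sc br G q r" and q2: "q \<ge> 2"
    and A: "classical_reductive sc br (G 0)"
    and B: "irred_module sc br (G 0) (G (-1))"
    and C: "\<forall>j\<ge>0. \<forall>x\<in>G j. (\<forall>y\<in>G (-1). br x y = 0) \<longrightarrow> x = 0"
    and D: "\<forall>i>1. G (-i) = brk sc br (G (-i + 1)) (G (-1))"
    and negideal: "\<forall>I. ideal_of sc br UNIV I \<and> I \<subseteq> module.span sc (\<Union>i\<in>{i. i < 0}. G i) \<longrightarrow> I = {0}"
    and S_min: "minimal_ideal sc br S"
    and S_unique: "\<forall>J. minimal_ideal sc br J \<longrightarrow> J = S"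
    and S_simple: "simple_alg sc br S"
    and S_graded: "S = module.span sc (\<Union>i. S \<inter> G i)"
    and S_top: "S \<inter> G s \<noteq> {0}" "\<forall>i>s. S \<inter> G i = {0}"
    and S_neg: "\<forall>i<0. S \<inter> G i = G i"
    and iv: "G 1 = S \<inter> G 1" "irred_module sc br (G 0) (G 1)"
    and vi: "\<forall>i\<ge>0. \<forall>x\<in>G (-i). x \<noteq> 0 \<longrightarrow> (\<exists>y\<in>G 1. br y x \<noteq> 0)"
    and vii: "not_restricted_on sc br (G 0) (G (-1))"
  shows "Ann br (G 1) (G (-2)) = {0}"
proof -
  have lie: "lie_algebra sc br" and subspace: "\<And>i. module.subspace sc (G i)"
    and graded: "\<And>i j x y. x \<in> G i \<Longrightarrow> y \<in> G j \<Longrightarrow> br x y \<in> G (i + j)"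
    and "G (-q) \<noteq> {0}"
    using grad unfolding graded_lie_def by blast+
  have G0_action: "\<forall>a\<in>G 0. \<forall>n\<in>G i. br a n \<in> G i" for i
    using graded[of _ 0] by simp
  have "G (-2) \<noteq> {0}"
  proof
    assume "G (-2) = {0}"
    then have "G (- (2 + int (nat (q - 2)))) = {0}"
      by (intro negative_part_vanishes_below[OF lie D]) simp_all
    moreover have "2 + int (nat (q - 2)) = q" using q2 by simp
    ultimately show False using \<open>G (-q) \<noteq> {0}\<close> by simp
  qed
  then obtain x where x: "x \<in> G (-2)" "x \<noteq> 0"
    using subspace unfolding module.subspace_def[OF lie_module[OF lie]] by blast
  then obtain y where "y \<in> G 1" "br y x \<noteq> 0" using vi[rule_format, of 2 x] by auto
  then have "Ann br (G 1) (G (-2)) \<noteq> G 1" using x unfolding Ann_def by blast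
  moreover have "Ann br (G 1) (G (-2)) = {0} \<or> Ann br (G 1) (G (-2)) = G 1"
    by (rule Ann_irred_module[OF lie iv(2) subspace G0_action G0_action])
  ultimately show ?thesis by blast
qed

end
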